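(* Let $\lambda\in(0,1)$ and let $G=([n],E)$ be any undirected graph (information graph). Then \[ \frac{\alpha(G) - (\alpha(G)-1)\lambda}{\alpha(G)} \;\ge\; \gamma_\lambda(G) \;\ge\; \frac{\theta(G) - (\theta(G)-1)\lambda}{\theta(G)+\lambda}, \] where $\alpha(G)$ is the independence number of $G$ and $\theta(G)$ is its clique cover number (the least number of cliques partitioning the vertex set).
   Context: For a finite base set $S$ and $f:2^S\to\mathbb{R}_{\ge0}$, write $f(A\mid B)=f(A\cup B)-f(B)$. $f$ is normalized if $f(\emptyset)=0$, monotone if $f(\{e\}\mid A)\ge0$ for all $e,A$, submodular if $f(\{e\}\mid A)\ge f(\{e\}\mid B)$ for $A\subseteq B\subseteq S$, $e\in S\setminus B$. Such $f$ has total curvature $\lambda\in(0,1)$ if $f(\{e\}\mid A)\ge(1-\lambda)f(\{e\})$ for all $e\in S$ and $A\subseteq S\setminus\{e\}$; $\mathcal{F}_\lambda$ is the set of normalized, monotone, submodular functions with total curvature $\lambda$. There are $n$ agents $[n]$ with decision sets $X_i\subseteq S$ forming a partition of $S$; action profiles $x\in X=X_1\times\cdots\times X_n$ are valued by $f(x)=f(\{x_1,\dots,x_n\})$, and $x_M=\{x_i:i\in M\}$. Let $x^{\mathrm{opt}}\in\arg\max_{x\in X}f(x)$. Given an undirected graph $G=([n],E)$, let $\mathcal{N}_i=\{j<i : (j,i)\in E\}$. The generalized greedy algorithm produces $x^{\mathrm{sol}}$ with $x^{\mathrm{sol}}_i\in\arg\max_{x_i\in X_i} f(x_i\mid x^{\mathrm{sol}}_{\mathcal{N}_i})$,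 taking $x^{\mathrm{sol}}$ to be the worst among all possible greedy outcomes. Define $\gamma(f,X,G)=f(x^{\mathrm{sol}})/f(x^{\mathrm{opt}})$ and $\gamma_\lambda(G)=\inf_{f\in\mathcal{F}_\lambda,X}\gamma(f,X,G)$. *)

theory Defs
  imports Main "HOL-Library.Disjoint_Sets" Complex_Main
begin

definition undirected_graph :: "nat \<Rightarrow> (nat \<times> nat) set \<Rightarrow> bool" where
  "undirected_graph n E \<longleftrightarrow> E \<subseteq> {1..n} \<times> {1..n} \<and> sym E \<and> irrefl E"

definition independent_set :: "(nat \<times> nat) set \<Rightarrow> nat set \<Rightarrow> bool" where
  "independent_set E I \<longleftrightarrow> (\<forall>u\<in>I. \<forall>v\<in>I. (u, v) \<notin> E)"

definition clique :: "(nat \<times> nat) set \<Rightarrow> nat set \<Rightarrow> bool" where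
  "clique E C \<longleftrightarrow> (\<forall>u\<in>C. \<forall>v\<in>C. u \<noteq> v \<longrightarrow> (u, v) \<in> E)"

definition independence_number :: "nat \<Rightarrow> (nat \<times> nat) set \<Rightarrow> nat" where
  "independence_number n E = Max {card I | I. I \<subseteq> {1..n} \<and> independent_set E I}"

definition clique_cover_number :: "nat \<Rightarrow> (nat \<times> nat) set \<Rightarrow> nat" where
  "clique_cover_number n E =
     (LEAST k. \<exists>P. partition_on {1..n} P \<and> (\<forall>C\<in>P. clique E C) \<and> card P = k)"

definition marg :: "(nat set \<Rightarrow> real) \<Rightarrow> nat set \<Rightarrow> nat set \<Rightarrow> real" where
  "marg f A B = f (A \<union> B) - f B"

text \<open>f : 2^S \<rightarrow> R_{\<ge>0} is normalized, monotone, submodular, with total curvature lambda.\<close>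
definition in_F_lambda :: "real \<Rightarrow> nat set \<Rightarrow> (nat set \<Rightarrow> real) \<Rightarrow> bool" where
  "in_F_lambda lam S f \<longleftrightarrow>
     (\<forall>A. A \<subseteq> S \<longrightarrow> f A \<ge> 0) \<and>
     f {} = 0 \<and>
     (\<forall>e\<in>S. \<forall>A. A \<subseteq> S \<longrightarrow> marg f {e} A \<ge> 0) \<and>
     (\<forall>A B e. A \<subseteq> B \<and> B \<subseteq> S \<and> e \<in> S - B \<longrightarrow> marg f {e} A \<ge> marg f {e} B) \<and>
     (\<forall>e\<in>S. \<forall>A. A \<subseteq> S - {e} \<longrightarrow> marg f {e} A \<ge> (1 - lam) * f {e})"

definition decision_sets :: "nat \<Rightarrow> nat set \<Rightarrow> (nat \<Rightarrow> nat set) \<Rightarrow> bool" where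
  "decision_sets n S X \<longleftrightarrow>
     (\<forall>i\<in>{1..n}. X i \<noteq> {}) \<and>
     (\<forall>i\<in>{1..n}. \<forall>j\<in>{1..n}. i \<noteq> j \<longrightarrow> X i \<inter> X j = {}) \<and>
     (\<Union>i\<in>{1..n}. X i) = S"

definition action_profile :: "nat \<Rightarrow> (nat \<Rightarrow> nat set) \<Rightarrow> (nat \<Rightarrow> nat) \<Rightarrow> bool" where
  "action_profile n X x \<longleftrightarrow> (\<forall>i\<in>{1..n}. x i \<in> X i)"

definition acts :: "(nat \<Rightarrow> nat) \<Rightarrow> nat set \<Rightarrow> nat set" where
  "acts x M = x ` M"

definition nbrs :: "(nat \<times> nat) set \<Rightarrow> nat \<Rightarrow> nat set" where
  "nbrs E i = {j. j < i \<and> (j, i) \<in> E}"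

definition opt_value :: "nat \<Rightarrow> (nat \<Rightarrow> nat set) \<Rightarrow> (nat set \<Rightarrow> real) \<Rightarrow> real" where
  "opt_value n X f = Max {f (acts x {1..n}) | x. action_profile n X x}"

definition greedy_outcome ::
  "nat \<Rightarrow> (nat \<times> nat) set \<Rightarrow> (nat \<Rightarrow> nat set) \<Rightarrow> (nat set \<Rightarrow> real) \<Rightarrow> (nat \<Rightarrow> nat) \<Rightarrow> bool" where
  "greedy_outcome n E X f x \<longleftrightarrow> action_profile n X x \<and>
     (\<forall>i\<in>{1..n}. \<forall>y\<in>X i. marg f {x i} (acts x (nbrs E i)) \<ge> marg f {y} (acts x (nbrs E i)))"

definition gamma ::
  "nat \<Rightarrow> (nat \<times> nat) set \<Rightarrow> (nat \<Rightarrow> nat set) \<Rightarrow> (nat set \<Rightarrow> real) \<Rightarrow> real" where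
  "gamma n E X f = Inf {f (acts x {1..n}) / opt_value n X f | x. greedy_outcome n E X f x}"

text \<open>gamma_lambda(G): infimum over finite base sets S (w.l.o.g. subsets of nat),
  decision-set partitions X, and f in F_lambda with positive optimum.\<close>
definition gamma_lambda :: "real \<Rightarrow> nat \<Rightarrow> (nat \<times> nat) set \<Rightarrow> real" where
  "gamma_lambda lam n E = Inf {gamma n E X f | S X f.
      finite S \<and> decision_sets n S X \<and> in_F_lambda lam S f \<and> opt_value n X f > 0}"

end

(*
  Let a_i = f(x_i | x_{N_i}) be the gain of greedy agent i and A the total gain.
  Within a clique C every earlier member of C is a neighbour of i, so by submodularity the gains
  in C sum to at most f(x_C); curvature adds at least (1 - lambda) a_j for every agent outside C.
  Summing over a clique cover with theta cliques gives
  (lambda + theta (1 - lambda)) A <= theta f(x).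
  Swapping the greedy and the optimal choices on the agents where they differ (submodularity from
  above, curvature from below) gives f(x_opt) <= f(x) + lambda A; eliminating A yields the bound.

  On a maximum independent set I no agent observes another, so each can be offered a
  tie between an element of a curved part, where k elements are jointly worth k - (k - 1) lambda,
  and a modular element of value 1: the worst greedy run takes the curved elements and gets
  alpha - (alpha - 1) lambda, the optimum takes the modular ones and gets alpha.
*)
theory Submission
  imports Defs
begin

lemma marg_sum_telescope:
  fixes f :: "nat set \<Rightarrow> real" and y :: "'i::linorder \<Rightarrow> nat"
  assumes "finite T"
  shows "(\<Sum>i\<in>T. marg f {y i} (B \<union> y ` {j\<in>T. j < i})) = f (B \<union> y ` T) - f B"
  using assms
proof (induction T rule: finite_linorder_max_induct)
  case (insert m T)
  have "m \<notin> T" and "{j\<in>insert m T. j < m} = T"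
    and "\<And>i. i \<in> T \<Longrightarrow> {j\<in>insert m T. j < i} = {j\<in>T. j < i}"
    using insert.hyps(2) by auto
  then have "(\<Sum>i\<in>insert m T. marg f {y i} (B \<union> y ` {j\<in>insert m T. j < i}))
      = marg f {y m} (B \<union> y ` T) + (f (B \<union> y ` T) - f B)"
    using insert by simp
  then show ?case
    by (simp add: marg_def insert_commute)
qed simp

lemma marg_self: "e \<in> B \<Longrightarrow> marg f {e} B = 0"
  by (simp add: marg_def insert_absorb)

context
  fixes lam :: real and S :: "nat set" and f :: "nat set \<Rightarrow> real"
  assumes F: "in_F_lambda lam S f"
begin

lemma in_F_lambda_nonneg: "A \<subseteq> S \<Longrightarrow> 0 \<le> f A"
  and in_F_lambda_empty: "f {} = 0"
  and in_F_lambda_marg_nonneg: "e \<in> S \<Longrightarrow> A \<subseteq> S \<Longrightarrow> 0 \<le> marg f {e} A"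
  and in_F_lambda_submodular:
    "A \<subseteq> B \<Longrightarrow> B \<subseteq> S \<Longrightarrow> e \<in> S - B \<Longrightarrow> marg f {e} B \<le> marg f {e} A"
  and in_F_lambda_curvature:
    "e \<in> S \<Longrightarrow> A \<subseteq> S \<Longrightarrow> e \<notin> A \<Longrightarrow> (1 - lam) * f {e} \<le> marg f {e} A"
  using F unfolding in_F_lambda_def by (auto simp: subset_Diff_insert)

lemma in_F_lambda_marg_le_singleton: "e \<in> S \<Longrightarrow> A \<subseteq> S \<Longrightarrow> e \<notin> A \<Longrightarrow> marg f {e} A \<le> f {e}"
  using in_F_lambda_submodular[of "{}" A e] by (simp add: marg_def in_F_lambda_empty)

end

lemma decision_sets_finite: "finite S \<Longrightarrow> decision_sets n S X \<Longrightarrow> i \<in> {1..n} \<Longrightarrow> finite (X i)"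
  unfolding decision_sets_def by (metis UN_upper finite_subset)

lemma action_profile_subset: "decision_sets n S X \<Longrightarrow> action_profile n X x \<Longrightarrow> acts x {1..n} \<subseteq> S"
  unfolding decision_sets_def action_profile_def acts_def by blast

lemma action_profile_exists: "decision_sets n S X \<Longrightarrow> \<exists>x. action_profile n X x"
  unfolding decision_sets_def action_profile_def
  by (intro exI[of _ "\<lambda>i. SOME y. y \<in> X i"]) (simp add: some_in_eq)

lemma greedy_prefix_exists:
  assumes "finite S" and "decision_sets n S X"
  shows "\<exists>x. action_profile n X x \<and>
     (\<forall>i\<in>{1..n}. i \<le> m \<longrightarrow>
        (\<forall>y\<in>X i. marg f {y} (acts x (nbrs E i)) \<le> marg f {x i} (acts x (nbrs E i))))"
proof (induction m)
  case 0
  show ?case using action_profile_exists[OF assms(2)] by simp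
next
  case (Suc m)
  then obtain x where x: "action_profile n X x"
    and greedy: "\<forall>i\<in>{1..n}. i \<le> m \<longrightarrow>
        (\<forall>y\<in>X i. marg f {y} (acts x (nbrs E i)) \<le> marg f {x i} (acts x (nbrs E i)))"
    by blast
  show ?case
  proof (cases "Suc m \<le> n")
    case False
    then have "\<forall>i\<in>{1..n}. i \<le> Suc m \<longrightarrow> i \<le> m" by auto
    then show ?thesis using x greedy by blast
  next
    case True
    define g where "g y = marg f {y} (acts x (nbrs E (Suc m)))" for y
    have "Suc m \<in> {1..n}" using True by simp
    then have "finite (X (Suc m))" and "X (Suc m) \<noteq> {}"
      using decision_sets_finite[OF assms] assms(2) unfolding decision_sets_def by blast+
    then obtain z where z: "z \<in> X (Suc m)" and "g z = Max (g ` X (Suc m))"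
      by (metis (mono_tags, lifting) Max_in finite_imageI image_iff image_is_empty)
    then have z_max: "\<forall>y\<in>X (Suc m). g y \<le> g z"
      using \<open>finite (X (Suc m))\<close> by simp
    define x' where "x' = x(Suc m := z)"
    have acts_eq: "acts x' (nbrs E i) = acts x (nbrs E i)" if "i \<le> Suc m" for i
      using that by (auto simp: x'_def nbrs_def acts_def)
    have "action_profile n X x'"
      using x z by (simp add: action_profile_def x'_def)
    moreover have "marg f {y} (acts x' (nbrs E i)) \<le> marg f {x' i} (acts x' (nbrs E i))"
      if "i \<in> {1..n}" "i \<le> Suc m" "y \<in> X i" for i y
    proof (cases "i = Suc m")
      case True
      then show ?thesis using that(3) z_max acts_eq[of i] by (simp add: x'_def g_def)
    next
      case False
      then show ?thesis using that greedy acts_eq[of i] by (simp add: x'_def)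
    qed
    ultimately show ?thesis by (intro exI[of _ x'] conjI ballI impI) simp_all
  qed
qed

lemma greedy_outcome_exists:
  assumes "finite S" and "decision_sets n S X"
  shows "\<exists>x. greedy_outcome n E X f x"
proof -
  obtain x where "action_profile n X x" and "\<forall>i\<in>{1..n}. i \<le> n \<longrightarrow>
      (\<forall>y\<in>X i. marg f {y} (acts x (nbrs E i)) \<le> marg f {x i} (acts x (nbrs E i)))"
    using greedy_prefix_exists[OF assms] by blast
  then show ?thesis unfolding greedy_outcome_def by auto
qed

lemma finite_action_profile_values:
  assumes "finite S" and "decision_sets n S X"
  shows "finite {f (acts x {1..n}) | x. action_profile n X x}"
proof -
  have "{f (acts x {1..n}) | x. action_profile n X x} \<subseteq> f ` Pow S"
    using action_profile_subset[OF assms(2)] by blast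
  then show ?thesis using assms(1) by (meson finite_Pow_iff finite_imageI finite_subset)
qed

lemma opt_value_ge:
  "finite S \<Longrightarrow> decision_sets n S X \<Longrightarrow> action_profile n X x \<Longrightarrow> f (acts x {1..n}) \<le> opt_value n X f"
  unfolding opt_value_def using finite_action_profile_values[of S n X f] by (intro Max_ge) auto

lemma opt_value_attained:
  assumes "finite S" and "decision_sets n S X"
  obtains x where "action_profile n X x" and "f (acts x {1..n}) = opt_value n X f"
proof -
  have "{f (acts x {1..n}) | x. action_profile n X x} \<noteq> {}"
    using action_profile_exists[OF assms(2)] by blast
  then have "opt_value n X f \<in> {f (acts x {1..n}) | x. action_profile n X x}"
    unfolding opt_value_def using Max_in[OF finite_action_profile_values[OF assms, of f]] by blast
  then show ?thesis using that by force
qed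

lemma action_profile_eq_imp_eq:
  assumes "decision_sets n S X" "action_profile n X y" "action_profile n X z"
    and "i \<in> {1..n}" "j \<in> {1..n}" "y i = z j"
  shows "i = j"
  using assms unfolding decision_sets_def action_profile_def by (metis disjoint_iff)

lemma action_profile_in_base_set:
  "decision_sets n S X \<Longrightarrow> action_profile n X y \<Longrightarrow> i \<in> {1..n} \<Longrightarrow> y i \<in> S"
  using action_profile_subset[of n S X y] by (auto simp: acts_def)

lemma Un_image_swap:
  assumes "D \<subseteq> A" and "\<And>i. i \<in> A - D \<Longrightarrow> x i = y i"
  shows "y ` A \<union> x ` D = x ` A \<union> y ` D"
proof -
  have "y ` A = y ` (A - D) \<union> y ` D" and "x ` A = x ` (A - D) \<union> x ` D"
    using assms(1) by blast+
  moreover have "y ` (A - D) = x ` (A - D)"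
    using assms(2) by (intro image_cong) auto
  ultimately show ?thesis by blast
qed

locale greedy_run =
  fixes lam :: real and n :: nat and E :: "(nat \<times> nat) set" and S :: "nat set"
    and X :: "nat \<Rightarrow> nat set" and f :: "nat set \<Rightarrow> real" and x :: "nat \<Rightarrow> nat"
  assumes lam_nonneg: "0 \<le> lam" and lam_le_1: "lam \<le> 1"
    and graph: "undirected_graph n E"
    and sets: "decision_sets n S X"
    and F: "in_F_lambda lam S f"
    and greedy: "greedy_outcome n E X f x"
begin

definition gain :: "nat \<Rightarrow> real" where
  "gain i = marg f {x i} (x ` nbrs E i)"

lemma x_profile: "action_profile n X x"
  using greedy by (simp add: greedy_outcome_def)

lemma x_in_S: "i \<in> {1..n} \<Longrightarrow> x i \<in> S"
  using action_profile_in_base_set[OF sets x_profile] .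

lemma nbrs_subset: "nbrs E i \<subseteq> {1..n} - {i}"
  using graph by (auto simp: undirected_graph_def nbrs_def)

lemma x_image_subset: "T \<subseteq> {1..n} \<Longrightarrow> x ` T \<subseteq> S"
  using x_in_S by blast

lemma x_notin_image: "i \<in> {1..n} \<Longrightarrow> T \<subseteq> {1..n} \<Longrightarrow> i \<notin> T \<Longrightarrow> x i \<notin> x ` T"
  using action_profile_eq_imp_eq[OF sets x_profile x_profile] by blast

lemma x_nbrs_subset: "x ` nbrs E i \<subseteq> S"
  using x_image_subset nbrs_subset by blast

lemma x_notin_nbrs: "i \<in> {1..n} \<Longrightarrow> x i \<notin> x ` nbrs E i"
  using x_notin_image[of i "nbrs E i"] nbrs_subset by blast

lemma gain_greedy: "i \<in> {1..n} \<Longrightarrow> y \<in> X i \<Longrightarrow> marg f {y} (x ` nbrs E i) \<le> gain i"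
  using greedy by (simp add: greedy_outcome_def gain_def acts_def)

lemma gain_nonneg: "i \<in> {1..n} \<Longrightarrow> 0 \<le> gain i"
  unfolding gain_def using x_nbrs_subset x_in_S by (intro in_F_lambda_marg_nonneg[OF F])

lemma gain_le_singleton: "i \<in> {1..n} \<Longrightarrow> gain i \<le> f {x i}"
  unfolding gain_def using x_nbrs_subset x_in_S x_notin_nbrs
  by (intro in_F_lambda_marg_le_singleton[OF F])

lemma gain_sum_le_increment:
  assumes "T \<subseteq> {1..n}" and "B \<subseteq> S" and "B \<inter> x ` T = {}"
  shows "(1 - lam) * (\<Sum>i\<in>T. gain i) \<le> f (B \<union> x ` T) - f B"
proof -
  have "(1 - lam) * (\<Sum>i\<in>T. gain i) = (\<Sum>i\<in>T. (1 - lam) * gain i)"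
    by (simp add: sum_distrib_left)
  also have "\<dots> \<le> (\<Sum>i\<in>T. marg f {x i} (B \<union> x ` {j\<in>T. j < i}))"
  proof (rule sum_mono)
    fix i assume i: "i \<in> T"
    have "(1 - lam) * gain i \<le> (1 - lam) * f {x i}"
      using gain_le_singleton lam_le_1 i assms(1) by (intro mult_left_mono) auto
    also have "\<dots> \<le> marg f {x i} (B \<union> x ` {j\<in>T. j < i})"
    proof (rule in_F_lambda_curvature[OF F])
      have "i \<in> {1..n}" and "{j\<in>T. j < i} \<subseteq> {1..n}" using i assms(1) by auto
      then show "x i \<in> S" and "B \<union> x ` {j\<in>T. j < i} \<subseteq> S"
        and "x i \<notin> B \<union> x ` {j\<in>T. j < i}"
        using assms(2,3) i x_in_S x_image_subset x_notin_image[of i "{j\<in>T. j < i}"] by auto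
    qed
    finally show "(1 - lam) * gain i \<le> marg f {x i} (B \<union> x ` {j\<in>T. j < i})" .
  qed
  also have "\<dots> = f (B \<union> x ` T) - f B"
    using assms(1) finite_subset by (intro marg_sum_telescope) blast
  finally show ?thesis .
qed

lemma clique_gain_le:
  assumes "C \<subseteq> {1..n}" and "clique E C"
  shows "(\<Sum>i\<in>C. gain i) \<le> f (x ` C)"
proof -
  have "(\<Sum>i\<in>C. gain i) \<le> (\<Sum>i\<in>C. marg f {x i} ({} \<union> x ` {j\<in>C. j < i}))"
  proof (rule sum_mono)
    fix i assume i: "i \<in> C"
    then have iV: "i \<in> {1..n}" using assms(1) by blast
    \<comment> \<open>the earlier members of a clique are among the neighbours that agent i observes\<close>
    have "{j\<in>C. j < i} \<subseteq> nbrs E i"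
      using assms(2) i unfolding clique_def nbrs_def by auto
    then show "gain i \<le> marg f {x i} ({} \<union> x ` {j\<in>C. j < i})"
      unfolding gain_def using x_nbrs_subset x_in_S[OF iV] x_notin_nbrs[OF iV]
      by (intro in_F_lambda_submodular[OF F]) auto
  qed
  also have "\<dots> = f (x ` C)"
    using assms(1) finite_subset in_F_lambda_empty[OF F]
    by (subst marg_sum_telescope) auto
  finally show ?thesis .
qed

lemma clique_value_bound:
  assumes "C \<subseteq> {1..n}" and "clique E C"
  shows "lam * (\<Sum>i\<in>C. gain i) + (1 - lam) * (\<Sum>i\<in>{1..n}. gain i) \<le> f (x ` {1..n})"
proof -
  have "(1 - lam) * (\<Sum>i\<in>{1..n} - C. gain i) \<le> f (x ` C \<union> x ` ({1..n} - C)) - f (x ` C)"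
  proof (rule gain_sum_le_increment)
    have "x i \<notin> x ` C" if "i \<in> {1..n} - C" for i
      using that assms(1) by (intro x_notin_image) auto
    then show "x ` C \<inter> x ` ({1..n} - C) = {}" by (intro disjoint_iff[THEN iffD2]) blast
  qed (use assms(1) x_image_subset in auto)
  moreover have "x ` C \<union> x ` ({1..n} - C) = x ` {1..n}"
    using assms(1) by blast
  moreover have "(\<Sum>i\<in>{1..n}. gain i) = (\<Sum>i\<in>C. gain i) + (\<Sum>i\<in>{1..n} - C. gain i)"
    using assms(1) by (metis finite_atLeastAtMost sum.subset_diff add.commute)
  ultimately show ?thesis
    using clique_gain_le[OF assms] by (simp add: algebra_simps)
qed

lemma clique_cover_value_bound:
  assumes "partition_on {1..n} P" and "\<forall>C\<in>P. clique E C"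
  shows "(lam + real (card P) * (1 - lam)) * (\<Sum>i\<in>{1..n}. gain i) \<le> real (card P) * f (x ` {1..n})"
proof -
  have P_sub: "C \<subseteq> {1..n}" if "C \<in> P" for C
    using assms(1) that by (auto simp: partition_on_def)
  have "finite P"
    using assms(1) by (metis finite_atLeastAtMost finite_UnionD partition_on_def)
  have "(\<Sum>C\<in>P. \<Sum>i\<in>C. gain i) = (\<Sum>i\<in>{1..n}. gain i)"
    using assms(1) P_sub finite_subset
    by (metis (no_types, lifting) finite_atLeastAtMost partition_on_def sum.Union_disjoint_sets
        comp_apply)
  moreover have "(\<Sum>C\<in>P. lam * (\<Sum>i\<in>C. gain i) + (1 - lam) * (\<Sum>i\<in>{1..n}. gain i))
      \<le> (\<Sum>C\<in>P. f (x ` {1..n}))"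
    using clique_value_bound P_sub assms(2) by (intro sum_mono) auto
  ultimately have "lam * (\<Sum>i\<in>{1..n}. gain i) + real (card P) * ((1 - lam) * (\<Sum>i\<in>{1..n}. gain i))
      \<le> real (card P) * f (x ` {1..n})"
    by (simp add: sum.distrib sum_distrib_left[symmetric])
  then show ?thesis by (simp add: algebra_simps)
qed

lemma greedy_exchange_bound:
  assumes "action_profile n X y" and "T \<subseteq> {1..n}"
  shows "f (x ` {1..n} \<union> y ` T) \<le> f (x ` {1..n}) + (\<Sum>i\<in>T. gain i)"
proof -
  have "f (x ` {1..n} \<union> y ` T) - f (x ` {1..n})
      = (\<Sum>i\<in>T. marg f {y i} (x ` {1..n} \<union> y ` {j\<in>T. j < i}))"
    using assms(2) finite_subset by (intro marg_sum_telescope[symmetric]) blast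
  also have "\<dots> \<le> (\<Sum>i\<in>T. gain i)"
  proof (rule sum_mono)
    fix i assume i: "i \<in> T"
    then have iV: "i \<in> {1..n}" using assms(2) by blast
    define B where "B = x ` {1..n} \<union> y ` {j\<in>T. j < i}"
    have B_sub: "B \<subseteq> S"
      using x_image_subset action_profile_in_base_set[OF sets assms(1)] assms(2)
      by (auto simp: B_def)
    show "marg f {y i} B \<le> gain i"
    proof (cases "y i \<in> B")
      case True
      then show ?thesis using marg_self gain_nonneg[OF iV] by simp
    next
      case False
      have "x ` nbrs E i \<subseteq> B" using nbrs_subset by (auto simp: B_def)
      then have "marg f {y i} B \<le> marg f {y i} (x ` nbrs E i)"
        using False B_sub action_profile_in_base_set[OF sets assms(1) iV]
        by (intro in_F_lambda_submodular[OF F]) auto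
      also have "\<dots> \<le> gain i"
        using assms(1) iV by (intro gain_greedy) (auto simp: action_profile_def)
      finally show ?thesis .
    qed
  qed
  finally show ?thesis by simp
qed

lemma profile_value_bound:
  assumes y: "action_profile n X y"
  shows "f (y ` {1..n}) \<le> f (x ` {1..n}) + lam * (\<Sum>i\<in>{1..n}. gain i)"
proof -
  \<comment> \<open>adding x on D to y is bounded below by curvature, adding y on D to x above by submodularity\<close>
  define D where "D = {i\<in>{1..n}. x i \<noteq> y i}"
  have D_sub: "D \<subseteq> {1..n}" by (auto simp: D_def)
  have "x i \<notin> y ` {1..n}" if i: "i \<in> D" for i
  proof
    assume "x i \<in> y ` {1..n}"
    then obtain j where "j \<in> {1..n}" and "x i = y j" by blast
    moreover have "i \<in> {1..n}" using i D_sub by blast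
    ultimately have "i = j" using action_profile_eq_imp_eq[OF sets x_profile y] by blast
    then show False using i \<open>x i = y j\<close> by (simp add: D_def)
  qed
  then have "y ` {1..n} \<inter> x ` D = {}"
    by (intro disjoint_iff[THEN iffD2]) blast
  then have low: "(1 - lam) * (\<Sum>i\<in>D. gain i) \<le> f (y ` {1..n} \<union> x ` D) - f (y ` {1..n})"
    using D_sub action_profile_subset[OF sets y]
    by (intro gain_sum_le_increment) (auto simp: acts_def)
  have "y ` {1..n} \<union> x ` D = x ` {1..n} \<union> y ` D"
    using D_sub by (intro Un_image_swap) (auto simp: D_def)
  then have "f (y ` {1..n} \<union> x ` D) \<le> f (x ` {1..n}) + (\<Sum>i\<in>D. gain i)"
    using greedy_exchange_bound[OF y D_sub] by simp
  moreover have "(\<Sum>i\<in>D. gain i) \<le> (\<Sum>i\<in>{1..n}. gain i)"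
    using D_sub gain_nonneg by (intro sum_mono2) auto
  ultimately show ?thesis
    using low lam_nonneg mult_left_mono[of "\<Sum>i\<in>D. gain i" "\<Sum>i\<in>{1..n}. gain i" lam]
    by (simp add: algebra_simps)
qed

lemma greedy_approximation:
  assumes "action_profile n X y" and "partition_on {1..n} P" and "\<forall>C\<in>P. clique E C"
  defines "k \<equiv> real (card P)"
  shows "(k - (k - 1) * lam) * f (y ` {1..n}) \<le> (k + lam) * f (x ` {1..n})"
proof -
  define A where "A = (\<Sum>i\<in>{1..n}. gain i)"
  have c_eq: "k - (k - 1) * lam = lam + k * (1 - lam)" by (simp add: algebra_simps)
  have c_nonneg: "0 \<le> lam + k * (1 - lam)"
    using lam_nonneg lam_le_1 by (simp add: k_def)
  have "(lam + k * (1 - lam)) * f (y ` {1..n}) \<le> (lam + k * (1 - lam)) * (f (x ` {1..n}) + lam * A)"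
    using profile_value_bound[OF assms(1)] c_nonneg by (simp add: A_def mult_left_mono)
  also have "\<dots> = (lam + k * (1 - lam)) * f (x ` {1..n}) + lam * ((lam + k * (1 - lam)) * A)"
    by (simp add: algebra_simps)
  also have "\<dots> \<le> (lam + k * (1 - lam)) * f (x ` {1..n}) + lam * (k * f (x ` {1..n}))"
    using clique_cover_value_bound[OF assms(2,3)] lam_nonneg
    by (simp add: A_def k_def mult_left_mono)
  also have "\<dots> = (k + lam) * f (x ` {1..n})"
    by (simp add: algebra_simps)
  finally show ?thesis by (simp only: c_eq)
qed

end

lemma gamma_le_ratio:
  assumes "decision_sets n S X" and "in_F_lambda lam S f" and "0 < opt_value n X f"
    and "greedy_outcome n E X f x"
  shows "gamma n E X f \<le> f (acts x {1..n}) / opt_value n X f"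
  unfolding gamma_def
proof (rule cInf_lower)
  show "bdd_below {f (acts x {1..n}) / opt_value n X f | x. greedy_outcome n E X f x}"
    using assms(3) action_profile_subset[OF assms(1)] in_F_lambda_nonneg[OF assms(2)]
    by (intro bdd_belowI[of _ 0]) (auto simp: greedy_outcome_def)
qed (use assms(4) in blast)

lemma gamma_ge:
  assumes "finite S" and "decision_sets n S X"
    and "\<And>x. greedy_outcome n E X f x \<Longrightarrow> c \<le> f (acts x {1..n}) / opt_value n X f"
  shows "c \<le> gamma n E X f"
  unfolding gamma_def using greedy_outcome_exists[OF assms(1,2)] assms(3)
  by (intro cInf_greatest) auto

lemma gamma_lambda_bounds:
  assumes lower: "\<And>S X f. finite S \<Longrightarrow> decision_sets n S X \<Longrightarrow> in_F_lambda lam S f \<Longrightarrow>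
      0 < opt_value n X f \<Longrightarrow> c \<le> gamma n E X f"
    and "finite S" "decision_sets n S X" "in_F_lambda lam S f" "0 < opt_value n X f"
  shows "c \<le> gamma_lambda lam n E" and "gamma_lambda lam n E \<le> gamma n E X f"
proof -
  define G where "G = {gamma n E X f | S X f.
      finite S \<and> decision_sets n S X \<and> in_F_lambda lam S f \<and> opt_value n X f > 0}"
  have inst: "gamma n E X f \<in> G" and G_lower: "\<And>g. g \<in> G \<Longrightarrow> c \<le> g"
    using assms unfolding G_def by blast+
  then show "c \<le> gamma_lambda lam n E"
    unfolding gamma_lambda_def G_def[symmetric] by (intro cInf_greatest) auto
  have "bdd_below G"
    using G_lower by (rule bdd_belowI)
  with inst show "gamma_lambda lam n E \<le> gamma n E X f"
    unfolding gamma_lambda_def G_def[symmetric] by (rule cInf_lower)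
qed

theorem gamma_ge_clique_cover_bound:
  assumes "0 < lam" "lam \<le> 1" and "undirected_graph n E"
    and "finite S" "decision_sets n S X" "in_F_lambda lam S f" "0 < opt_value n X f"
    and "partition_on {1..n} P" "\<forall>C\<in>P. clique E C"
  defines "k \<equiv> real (card P)"
  shows "(k - (k - 1) * lam) / (k + lam) \<le> gamma n E X f"
proof (rule gamma_ge[OF assms(4,5)])
  fix x assume "greedy_outcome n E X f x"
  then interpret greedy_run lam n E S X f x
    using assms(1-3,5,6) by unfold_locales auto
  obtain y where y: "action_profile n X y" and y_opt: "f (acts y {1..n}) = opt_value n X f"
    using opt_value_attained[OF assms(4,5)] .
  have "(k - (k - 1) * lam) * opt_value n X f \<le> (k + lam) * f (acts x {1..n})"
    using greedy_approximation[OF y assms(8,9)] y_opt by (simp add: k_def acts_def)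
  moreover have "0 < k + lam" using assms(1) by (simp add: k_def add_nonneg_pos)
  ultimately show "(k - (k - 1) * lam) / (k + lam) \<le> f (acts x {1..n}) / opt_value n X f"
    using assms(7) by (simp add: divide_le_eq le_divide_eq mult.commute)
qed

definition curved_count :: "real \<Rightarrow> nat set \<Rightarrow> nat set \<Rightarrow> nat set \<Rightarrow> real" where
  "curved_count lam P Q A =
     (1 - lam) * card (A \<inter> P) + (if A \<inter> P = {} then 0 else lam) + card (A \<inter> Q)"

lemma card_insert_Int:
  "finite P \<Longrightarrow> card (insert e A \<inter> P) = card (A \<inter> P) + (if e \<in> P - A then 1 else 0)"
  by (simp add: Int_insert_left card_insert_if)

lemma marg_curved_count:
  assumes "finite P" and "finite Q"
  shows "marg (curved_count lam P Q) {e} A =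
    (if e \<in> P - A then (if A \<inter> P = {} then 1 else 1 - lam) else 0) + (if e \<in> Q - A then 1 else 0)"
proof (cases "e \<in> A")
  case False
  then show ?thesis
    using assms by (auto simp: marg_def curved_count_def card_insert_Int algebra_simps)
qed (simp add: marg_self)

lemma curved_count_in_F_lambda:
  assumes "finite P" and "finite Q" and "0 \<le> lam" and "lam \<le> 1"
  shows "in_F_lambda lam S (curved_count lam P Q)"
proof -
  have singleton:
    "curved_count lam P Q {e} = (if e \<in> P then 1 else 0) + (if e \<in> Q then 1 else 0)" for e
    by (auto simp: curved_count_def)
  show ?thesis
    unfolding in_F_lambda_def using assms
    by (auto simp: marg_curved_count singleton curved_count_def)
qed

(* Agent i of I chooses between 2i (curved part) and 2i + 1 (modular part); every other agent
   only has the worthless element 2i. *)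
definition twin_choices :: "nat set \<Rightarrow> nat \<Rightarrow> nat set" where
  "twin_choices I i = (if i \<in> I then {2 * i, 2 * i + 1} else {2 * i})"

definition twin_value :: "real \<Rightarrow> nat set \<Rightarrow> nat set \<Rightarrow> real" where
  "twin_value lam I = curved_count lam ((\<lambda>i. 2 * i) ` I) ((\<lambda>i. 2 * i + 1) ` I)"

lemma twin_choices_div2: "u \<in> twin_choices I i \<Longrightarrow> u div 2 = i"
  by (auto simp: twin_choices_def split: if_splits)

lemma finite_twin_choices: "finite (\<Union>i\<in>{1..n}. twin_choices I i)"
  by (simp add: twin_choices_def)

lemma decision_sets_twin_choices: "decision_sets n (\<Union>i\<in>{1..n}. twin_choices I i) (twin_choices I)"
  unfolding decision_sets_def
  by (auto simp: twin_choices_def dest: twin_choices_div2)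

lemma greedy_outcome_twin_choices:
  assumes "finite I" and "independent_set E I"
  shows "greedy_outcome n E (twin_choices I) (twin_value lam I) (\<lambda>i. 2 * i)"
  unfolding greedy_outcome_def action_profile_def
proof (intro conjI ballI)
  fix i y assume "i \<in> {1..n}" and y: "y \<in> twin_choices I i"
  define B where "B = acts (\<lambda>i. 2 * i) (nbrs E i)"
  have "j \<notin> I" if "i \<in> I" "j \<in> nbrs E i" for j
    using assms(2) that by (auto simp: independent_set_def nbrs_def)
  then have "i \<in> I \<Longrightarrow> B \<inter> (\<lambda>i. 2 * i) ` I = {}"
    by (auto simp: B_def acts_def)
  moreover have "B \<inter> (\<lambda>i. 2 * i + 1) ` I = {}"
    by (auto simp: B_def acts_def) presburger
  ultimately show "marg (twin_value lam I) {y} B \<le> marg (twin_value lam I) {2 * i} B"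
    using y assms(1)
    by (auto simp: twin_value_def marg_curved_count twin_choices_def split: if_splits) presburger+
qed (simp add: twin_choices_def)

lemma twin_value_greedy_profile:
  assumes "I \<subseteq> {1..n}" and "I \<noteq> {}"
  shows "twin_value lam I (acts (\<lambda>i. 2 * i) {1..n}) = real (card I) - (real (card I) - 1) * lam"
proof -
  have "(\<lambda>i. 2 * i) ` {1..n} \<inter> (\<lambda>i. 2 * i) ` I = (\<lambda>i. 2 * i) ` I"
    using assms(1) by blast
  moreover have "(\<lambda>i. 2 * i) ` {1..n} \<inter> (\<lambda>i::nat. 2 * i + 1) ` I = {}"
    by auto presburger
  moreover have "card ((\<lambda>i::nat. 2 * i) ` I) = card I"
    by (simp add: card_image inj_on_def)
  ultimately show ?thesis
    using assms(2) by (simp add: twin_value_def curved_count_def acts_def algebra_simps)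
qed

lemma twin_opt_value_ge_card:
  assumes "I \<subseteq> {1..n}"
  shows "real (card I) \<le> opt_value n (twin_choices I) (twin_value lam I)"
proof -
  define y where "y i = (if i \<in> I then 2 * i + 1 else 2 * i)" for i
  have "y ` {1..n} \<inter> (\<lambda>i. 2 * i) ` I = {}"
    by (auto simp: y_def) presburger+
  moreover have "y ` {1..n} \<inter> (\<lambda>i. 2 * i + 1) ` I = (\<lambda>i. 2 * i + 1) ` I"
    using assms by (auto simp: y_def image_iff)
  moreover have "card ((\<lambda>i::nat. 2 * i + 1) ` I) = card I"
    by (simp add: card_image inj_on_def)
  ultimately have "twin_value lam I (acts y {1..n}) = real (card I)"
    by (simp add: twin_value_def curved_count_def acts_def)
  moreover have "action_profile n (twin_choices I) y"
    by (simp add: action_profile_def twin_choices_def y_def)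
  ultimately show ?thesis
    using opt_value_ge[OF finite_twin_choices decision_sets_twin_choices] by metis
qed

lemma twin_instance:
  assumes "0 \<le> lam" "lam \<le> 1" and "I \<subseteq> {1..n}" "I \<noteq> {}" and "independent_set E I"
  shows "\<exists>S X f. finite S \<and> decision_sets n S X \<and> in_F_lambda lam S f \<and> 0 < opt_value n X f \<and>
      gamma n E X f \<le> (real (card I) - (real (card I) - 1) * lam) / real (card I)"
proof -
  have "finite I" using assms(3) finite_subset by blast
  then have F: "in_F_lambda lam S (twin_value lam I)" for S
    using assms(1,2) unfolding twin_value_def by (intro curved_count_in_F_lambda) auto
  have card_pos: "0 < real (card I)"
    using \<open>finite I\<close> assms(4) by (simp add: card_gt_0_iff)
  have opt: "real (card I) \<le> opt_value n (twin_choices I) (twin_value lam I)"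
    by (rule twin_opt_value_ge_card[OF assms(3)])
  then have opt_pos: "0 < opt_value n (twin_choices I) (twin_value lam I)"
    using card_pos by linarith
  have "gamma n E (twin_choices I) (twin_value lam I)
      \<le> twin_value lam I (acts (\<lambda>i. 2 * i) {1..n})
          / opt_value n (twin_choices I) (twin_value lam I)"
    using greedy_outcome_twin_choices[OF \<open>finite I\<close> assms(5)]
    by (intro gamma_le_ratio[OF decision_sets_twin_choices F opt_pos])
  also have "\<dots> \<le> twin_value lam I (acts (\<lambda>i. 2 * i) {1..n}) / real (card I)"
    using card_pos opt in_F_lambda_nonneg[OF F[of UNIV]] by (intro divide_left_mono) auto
  finally have "gamma n E (twin_choices I) (twin_value lam I)
      \<le> (real (card I) - (real (card I) - 1) * lam) / real (card I)"
    unfolding twin_value_greedy_profile[OF assms(3,4)] .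
  then show ?thesis
    using F opt_pos finite_twin_choices decision_sets_twin_choices
    by (intro exI[of _ "\<Union>i\<in>{1..n}. twin_choices I i"] exI[of _ "twin_choices I"]
        exI[of _ "twin_value lam I"]) simp
qed

lemma finite_independent_set_cards: "finite {card I | I. I \<subseteq> {1..n} \<and> independent_set E I}"
proof (rule finite_subset)
  show "{card I | I. I \<subseteq> {1..n} \<and> independent_set E I} \<subseteq> card ` Pow {1..n}"
    by auto
qed simp

lemma independent_set_card_le_independence_number:
  "I \<subseteq> {1..n} \<Longrightarrow> independent_set E I \<Longrightarrow> card I \<le> independence_number n E"
  unfolding independence_number_def using finite_independent_set_cards by (auto intro: Max_ge)

lemma independence_number_attained:
  obtains I where "I \<subseteq> {1..n}" and "independent_set E I" and "card I = independence_number n E"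
proof -
  have "{card I | I. I \<subseteq> {1..n} \<and> independent_set E I} \<noteq> {}"
    by (auto simp: independent_set_def)
  then have "independence_number n E \<in> {card I | I. I \<subseteq> {1..n} \<and> independent_set E I}"
    unfolding independence_number_def using finite_independent_set_cards by (rule Max_in[rotated])
  then show ?thesis using that by auto
qed

lemma independence_number_pos:
  assumes "1 \<le> n" and "undirected_graph n E"
  shows "1 \<le> independence_number n E"
proof -
  have "independent_set E {1}"
    using assms(2) by (auto simp: independent_set_def undirected_graph_def irrefl_def)
  then show ?thesis
    using independent_set_card_le_independence_number[of "{1}"] assms(1) by simp
qed

lemma clique_cover_number_attained:
  obtains P where "partition_on {1..n} P" and "\<forall>C\<in>P. clique E C"
    and "card P = clique_cover_number n E"
proof -
  have "partition_on {1..n} ((\<lambda>i. {i}) ` {1..n})"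
    by (auto simp: partition_on_def disjoint_def)
  moreover have "\<forall>C\<in>(\<lambda>i. {i}) ` {1..n}. clique E C"
    by (auto simp: clique_def)
  ultimately have "\<exists>k P. partition_on {1..n} P \<and> (\<forall>C\<in>P. clique E C) \<and> card P = k"
    by auto
  then have "\<exists>P. partition_on {1..n} P \<and> (\<forall>C\<in>P. clique E C) \<and> card P = clique_cover_number n E"
    unfolding clique_cover_number_def by (rule LeastI_ex)
  then show ?thesis using that by auto
qed

theorem lemma4:
  fixes lam :: real and n :: nat and E :: "(nat \<times> nat) set"
  assumes "0 < lam" "lam < 1"
    and "n \<ge> 1"
    and "undirected_graph n E"
  shows "(real (independence_number n E) - (real (independence_number n E) - 1) * lam)
           / real (independence_number n E) \<ge> gamma_lambda lam n E
       \<and> gamma_lambda lam n E \<ge>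
         (real (clique_cover_number n E) - (real (clique_cover_number n E) - 1) * lam)
           / (real (clique_cover_number n E) + lam)"
proof -
  obtain P where P: "partition_on {1..n} P" "\<forall>C\<in>P. clique E C" "card P = clique_cover_number n E"
    by (rule clique_cover_number_attained)
  obtain I where I: "I \<subseteq> {1..n}" "independent_set E I" "card I = independence_number n E"
    by (rule independence_number_attained)
  moreover have "I \<noteq> {}"
    using I(3) independence_number_pos[OF assms(3,4)] by auto
  ultimately obtain S X f where valid: "finite S" "decision_sets n S X" "in_F_lambda lam S f"
      "0 < opt_value n X f"
    and upper: "gamma n E X f \<le> (real (card I) - (real (card I) - 1) * lam) / real (card I)"
    using twin_instance assms(1,2) by (metis less_imp_le)
  have "(real (card P) - (real (card P) - 1) * lam) / (real (card P) + lam) \<le> gamma n E X' f'"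
    if "finite S'" "decision_sets n S' X'" "in_F_lambda lam S' f'" "0 < opt_value n X' f'"
    for S' X' f'
    using gamma_ge_clique_cover_bound[OF _ _ assms(4) that P(1,2)] assms(1,2) by simp
  note bounds = gamma_lambda_bounds[OF this valid]
  show ?thesis
    using bounds(1) order_trans[OF bounds(2) upper] I(3) P(3) by simp
qed

end
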